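(* Let $I\ge 1$ and let $\Delta_{>0}=\{P=(p_{i,j})_{1\le i,j\le I}: p_{i,j}>0,\ \sum_{i,j}p_{i,j}=1\}$. Then $\mathcal{M}_2\cap\Delta_{>0}\subseteq\mathcal{M}_1\cap\Delta_{>0}$.
   Context: $\mathcal{M}_1$ is the set of $I\times I$ matrices $P$ with non-negative entries summing to $1$ such that there exist non-negative vectors $\zeta^{(r)},\zeta^{(c)},\zeta^{(\gamma)}\in\mathbb{R}^I_{\ge 0}$ with $p_{i,j}=\zeta^{(r)}_i\zeta^{(c)}_j$ for $i\ne j$ and $p_{i,i}=\zeta^{(r)}_i\zeta^{(c)}_i\zeta^{(\gamma)}_i$. $\mathcal{M}_2$ is the set of $I\times I$ matrices of the form $P=\alpha cr^t+(1-\alpha)D$, where $r,c\in\mathbb{R}^I_{\ge0}$ each have entries summing to $1$, $D=\mathrm{diag}(d_1,\dots,d_I)$ with $d_i\ge0$ and $\sum_i d_i=1$, and $\alpha\in[0,1]$. *)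

theory Defs
  imports Main "HOL-Analysis.Analysis"
begin

text \<open>Matrices indexed by a finite nonempty type 'i (so I = CARD('i) \<ge> 1),
  represented as functions 'i \<Rightarrow> 'i \<Rightarrow> real, P i j = p_{i,j}.\<close>

definition M1 :: "('i::finite \<Rightarrow> 'i \<Rightarrow> real) set" where
  "M1 = {P. (\<forall>i j. P i j \<ge> 0) \<and> (\<Sum>i\<in>UNIV. \<Sum>j\<in>UNIV. P i j) = 1 \<and>
      (\<exists>zr zc zg :: 'i \<Rightarrow> real. (\<forall>i. zr i \<ge> 0 \<and> zc i \<ge> 0 \<and> zg i \<ge> 0) \<and>
         (\<forall>i j. i \<noteq> j \<longrightarrow> P i j = zr i * zc j) \<and>
         (\<forall>i. P i i = zr i * zc i * zg i))}"

definition M2 :: "('i::finite \<Rightarrow> 'i \<Rightarrow> real) set" where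
  "M2 = {P. \<exists>(r :: 'i \<Rightarrow> real) (c :: 'i \<Rightarrow> real) (d :: 'i \<Rightarrow> real) (\<alpha> :: real).
      (\<forall>i. r i \<ge> 0) \<and> sum r UNIV = 1 \<and>
      (\<forall>i. c i \<ge> 0) \<and> sum c UNIV = 1 \<and>
      (\<forall>i. d i \<ge> 0) \<and> sum d UNIV = 1 \<and>
      0 \<le> \<alpha> \<and> \<alpha> \<le> 1 \<and>
      (\<forall>i j. P i j = \<alpha> * (c i * r j) + (1 - \<alpha>) * (if i = j then d i else 0))}"

definition Delta_pos :: "('i::finite \<Rightarrow> 'i \<Rightarrow> real) set" where
  "Delta_pos = {P. (\<forall>i j. P i j > 0) \<and> (\<Sum>i\<in>UNIV. \<Sum>j\<in>UNIV. P i j) = 1}"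

end

theory Submission
  imports Defs
begin

text \<open>Off the diagonal, \<open>\<alpha> c r\<^sup>t + (1 - \<alpha>) D\<close> is the rank-one matrix \<open>(\<alpha> c) r\<^sup>t\<close>.
  If all entries are positive and \<open>I \<ge> 2\<close>, every entry of both factors is positive (each
  index has a partner off the diagonal), so the diagonal entry \<open>p\<^sub>i\<^sub>i\<close> is absorbed by
  the factor \<open>\<zeta>\<^sup>\<gamma>\<^sub>i = p\<^sub>i\<^sub>i / (\<zeta>\<^sup>r\<^sub>i \<zeta>\<^sup>c\<^sub>i)\<close>. For \<open>I = 1\<close> take \<open>\<zeta>\<^sup>r = \<zeta>\<^sup>c = 1\<close>.\<close>

lemma M2_offdiag_rank_one:
  assumes "P \<in> M2"
  obtains u v :: "'i::finite \<Rightarrow> real"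
  where "\<And>i. u i \<ge> 0" "\<And>i. v i \<ge> 0" "\<And>i j. i \<noteq> j \<Longrightarrow> P i j = u i * v j"
proof -
  from assms obtain r c d and \<alpha> :: real where
    "\<forall>i. r i \<ge> 0" "\<forall>i. c i \<ge> 0" "0 \<le> \<alpha>"
    "\<forall>i j. P i j = \<alpha> * (c i * r j) + (1 - \<alpha>) * (if i = j then d i else 0)"
    unfolding M2_def by blast
  then show thesis
    by (intro that[of "\<lambda>i. \<alpha> * c i" r]) (simp_all add: mult.assoc)
qed

lemma M1_if_pos_offdiag_rank_one:
  fixes P :: "'i::finite \<Rightarrow> 'i \<Rightarrow> real"
  assumes pos: "\<And>i j. 0 < P i j" and total: "(\<Sum>i\<in>UNIV. \<Sum>j\<in>UNIV. P i j) = 1"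
    and u: "\<And>i. u i \<ge> 0" and v: "\<And>i. v i \<ge> 0"
    and off: "\<And>i j. i \<noteq> j \<Longrightarrow> P i j = u i * v j"
  shows "P \<in> M1"
proof -
  have "\<exists>zr zc zg :: 'i \<Rightarrow> real. (\<forall>i. zr i \<ge> 0 \<and> zc i \<ge> 0 \<and> zg i \<ge> 0) \<and>
         (\<forall>i j. i \<noteq> j \<longrightarrow> P i j = zr i * zc j) \<and> (\<forall>i. P i i = zr i * zc i * zg i)"
  proof (cases "\<forall>i j :: 'i. i = j")
    case True
    then show ?thesis
      using pos by (intro exI[of _ "\<lambda>_. 1"] exI[of _ "\<lambda>i. P i i"]) (simp add: less_imp_le)
  next
    case False
    then obtain a b :: 'i where "a \<noteq> b" by blast
    have uv_pos: "0 < u i \<and> 0 < v i" for i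
    proof -
      obtain j where "j \<noteq> i" using \<open>a \<noteq> b\<close> by metis
      then have "0 < u i * v j" "0 < u j * v i"
        using pos[of i j] pos[of j i] off[of i j] off[of j i] by simp_all
      with u[of i] v[of i] show ?thesis
        by (auto simp: zero_less_mult_iff)
    qed
    define zg where "zg i = P i i / (u i * v i)" for i
    have "zg i \<ge> 0" "P i i = u i * v i * zg i" for i
      using pos[of i i] uv_pos[of i] by (simp_all add: zg_def)
    then show ?thesis
      using u v off by (intro exI[of _ u] exI[of _ v] exI[of _ zg]) blast
  qed
  moreover have "\<forall>i j. P i j \<ge> 0"
    using pos by (simp add: less_imp_le)
  ultimately show ?thesis
    unfolding M1_def using total by blast
qed

theorem proposition3p7:
  shows "(M2 \<inter> Delta_pos :: ('i::finite \<Rightarrow> 'i \<Rightarrow> real) set) \<subseteq> M1 \<inter> Delta_pos"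
proof
  fix P :: "'i \<Rightarrow> 'i \<Rightarrow> real"
  assume P: "P \<in> M2 \<inter> Delta_pos"
  then have pos: "\<And>i j. 0 < P i j" and total: "(\<Sum>i\<in>UNIV. \<Sum>j\<in>UNIV. P i j) = 1"
    by (auto simp: Delta_pos_def)
  from P obtain u v where "\<And>i. u i \<ge> 0" "\<And>i. v i \<ge> 0"
    and "\<And>i j. i \<noteq> j \<Longrightarrow> P i j = u i * v j"
    using M2_offdiag_rank_one by blast
  with pos total have "P \<in> M1"
    by (rule M1_if_pos_offdiag_rank_one)
  with P show "P \<in> M1 \<inter> Delta_pos" by blast
qed

end
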